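(* There is a function $\varepsilon:\mathbb{N}\to[0,\infty)$ with $\varepsilon(n)\to0$ as $n\to\infty$ such that for every $n$ there are permutations $\pi,\tau\in S_n$ with $d(\pi,\tau)=1$ and \[\Delta(\lambda(\pi),\lambda(\tau))\ge(1-\varepsilon(n))\sqrt{n/2}.\]
   Context: Permutations are written in one-line notation. For $\pi\in S_n$, $\lambda(\pi)$ denotes the shape of the tableaux associated with $\pi$ by the RSK correspondence. The distance $d(\pi,\tau)$ is the least number of adjacent transpositions $(k,k+1)$, $1\le k\le n-1$, whose successive left multiplication transforms $\pi$ into $\tau$. For partitions $\lambda,\mu$ of $n$ (parts padded with zeros), $\Delta(\lambda,\mu)=\frac12\sum_{i=1}^n|\lambda_i-\mu_i|$. *)

theory Defs
  imports Complex_Main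
begin

definition is_perm :: "nat \<Rightarrow> nat list \<Rightarrow> bool" where
  "is_perm n p \<longleftrightarrow> length p = n \<and> distinct p \<and> set p = {1..n}"

text \<open>Left multiplication by the adjacent transposition (k,k+1): swap the values k and k+1.\<close>
definition swap_adj :: "nat \<Rightarrow> nat \<Rightarrow> nat" where
  "swap_adj k v = (if v = k then k + 1 else if v = k + 1 then k else v)"

definition adj_step :: "nat \<Rightarrow> nat list \<Rightarrow> nat list \<Rightarrow> bool" where
  "adj_step n p q \<longleftrightarrow> (\<exists>k. 1 \<le> k \<and> k \<le> n - 1 \<and> q = map (swap_adj k) p)"

definition perm_dist :: "nat \<Rightarrow> nat list \<Rightarrow> nat list \<Rightarrow> nat" where
  "perm_dist n p q = (LEAST m. (adj_step n ^^ m) p q)"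

fun bump :: "nat list \<Rightarrow> nat \<Rightarrow> nat list \<times> nat option" where
  "bump [] x = ([x], None)"
| "bump (y # ys) x = (if x < y then (x # ys, Some y)
                      else (let (zs, b) = bump ys x in (y # zs, b)))"

fun rsk_insert :: "nat list list \<Rightarrow> nat \<Rightarrow> nat list list" where
  "rsk_insert [] x = [[x]]"
| "rsk_insert (r # rs) x = (case bump r x of
       (r', None) \<Rightarrow> r' # rs
     | (r', Some y) \<Rightarrow> r' # rsk_insert rs y)"

definition rsk_P :: "nat list \<Rightarrow> nat list list" where
  "rsk_P p = foldl rsk_insert [] p"

definition rsk_shape :: "nat list \<Rightarrow> nat list" where
  "rsk_shape p = map length (rsk_P p)"

text \<open>Parts of a partition padded with zeros (1-based index i is list index i-1).\<close>
definition part :: "nat list \<Rightarrow> nat \<Rightarrow> nat" where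
  "part la i = (if i < length la then la ! i else 0)"

definition Delta :: "nat \<Rightarrow> nat list \<Rightarrow> nat list \<Rightarrow> real" where
  "Delta n la mu = (\<Sum>i<n. \<bar>real (part la i) - real (part mu i)\<bar>) / 2"

end

theory Submission
  imports Defs
begin

text \<open>
  A permutation \<open>w\<close> of \<open>{1..2(r-1)\<^sup>2}\<close>, shifted by \<open>2r-1\<close>, is placed in the middle of a
  permutation \<open>grow r w\<close> of \<open>{1..2r\<^sup>2}\<close>: before it come the decreasing run \<open>2r-1, ..., 2\<close> and
  the value \<open>2r\<^sup>2\<close>, after it the value \<open>1\<close> and the decreasing run \<open>2r\<^sup>2-1, ..., 2r\<^sup>2-2r+2\<close>.
  Under Schensted insertion the two runs become a new first and a new last column of the tableau
  of \<open>w\<close>, so every row grows by two; in addition the shape gains two rows of length 2 if the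
  tableau of \<open>w\<close> has \<open>2r-3\<close> rows, and two rows of length 1 if it has \<open>2r-2\<close> rows. Iterating
  from \<open>12\<close> and \<open>21\<close> gives two permutations of \<open>{1..2r\<^sup>2}\<close> that differ by the adjacent
  transposition \<open>(r\<^sup>2, r\<^sup>2+1)\<close> and whose shapes differ by one in each of the first \<open>2r\<close> rows,
  so \<open>\<Delta> = r\<close>. Padding with large increasing entries lengthens only the first row, and
  \<open>r = \<lfloor>\<surd>(n/2)\<rfloor>\<close> gives the theorem.
\<close>

definition entries :: "nat list list \<Rightarrow> nat set" where
  "entries T = set (concat T)"

lemma nth_subset_entries: "i < length T \<Longrightarrow> set (T ! i) \<subseteq> entries T"
  by (auto simp: entries_def intro!: bexI[of _ "T ! i"])

lemma bump_bumped_mem: "snd (bump r x) = Some y \<Longrightarrow> y \<in> set r"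
  by (induction r x rule: bump.induct) (auto split: prod.splits if_splits)

lemma set_fst_bump: "set (fst (bump r x)) \<subseteq> insert x (set r)"
  by (induction r x rule: bump.induct) (auto split: prod.splits if_splits)

lemma bump_greater: "\<forall>y\<in>set r. y < x \<Longrightarrow> bump r x = (r @ [x], None)"
  by (induction r) auto

lemma bump_last: "\<forall>y\<in>set r. y < x \<Longrightarrow> x < e \<Longrightarrow> bump (r @ [e]) x = (r @ [x], Some e)"
  by (induction r) auto

lemma entries_rsk_insert: "entries (rsk_insert T x) \<subseteq> insert x (entries T)"
proof (induction T x rule: rsk_insert.induct)
  case (1 x)
  then show ?case by (simp add: entries_def)
next
  case (2 r rs x)
  obtain r' b where rb: "bump r x = (r', b)" by fastforce
  have r': "set r' \<subseteq> insert x (set r)" using set_fst_bump[of r x] rb by simp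
  show ?case
  proof (cases b)
    case None
    then show ?thesis using rb r' by (auto simp: entries_def)
  next
    case (Some y)
    have "y \<in> set r" using bump_bumped_mem[of r x y] rb Some by simp
    then show ?thesis using rb Some r' "2"[OF rb[symmetric] Some] by (auto simp: entries_def)
  qed
qed

lemma entries_foldl_rsk_insert: "entries (foldl rsk_insert T xs) \<subseteq> entries T \<union> set xs"
  by (induction xs arbitrary: T) (fastforce dest: subsetD[OF entries_rsk_insert])+

lemma entries_rsk_P: "entries (rsk_P w) \<subseteq> set w"
  using entries_foldl_rsk_insert[of "[]" w] by (simp add: rsk_P_def entries_def)

lemma rsk_insert_not_Nil: "rsk_insert T x \<noteq> []"
  by (cases T) (auto split: prod.splits option.splits)

lemma rsk_P_not_Nil: "w \<noteq> [] \<Longrightarrow> rsk_P w \<noteq> []"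
  by (induction w rule: rev_induct) (simp_all add: rsk_P_def rsk_insert_not_Nil)

lemma bump_shift:
  "bump (map (\<lambda>x. x + c) r) (x + c) =
     (map (\<lambda>x. x + c) (fst (bump r x)), map_option (\<lambda>x. x + c) (snd (bump r x)))"
  by (induction r x rule: bump.induct) (auto split: prod.splits)

lemma rsk_insert_shift:
  "rsk_insert (map (map (\<lambda>x. x + c)) T) (x + c) = map (map (\<lambda>x. x + c)) (rsk_insert T x)"
proof (induction T x rule: rsk_insert.induct)
  case (2 r rs x)
  then show ?case using bump_shift[of c r x] by (cases "bump r x") (auto split: option.splits)
qed simp

lemma rsk_P_shift: "rsk_P (map (\<lambda>x. x + c) w) = map (map (\<lambda>x. x + c)) (rsk_P w)"
proof -
  have "foldl rsk_insert (map (map (\<lambda>x. x + c)) T) (map (\<lambda>x. x + c) xs)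
          = map (map (\<lambda>x. x + c)) (foldl rsk_insert T xs)" for T xs
    by (induction xs arbitrary: T) (auto simp: rsk_insert_shift)
  from this[of "[]" w] show ?thesis by (simp add: rsk_P_def)
qed

lemma rsk_shape_shift: "map length (rsk_P (map (\<lambda>x. x + c) w)) = rsk_shape w"
  by (simp add: rsk_shape_def rsk_P_shift comp_def)

lemma rsk_P_append_greater:
  assumes "sorted_wrt (<) xs" "\<forall>v\<in>entries (R # Rs). \<forall>x\<in>set xs. v < x"
  shows "foldl rsk_insert (R # Rs) xs = (R @ xs) # Rs"
  using assms
proof (induction xs arbitrary: R)
  case (Cons x xs)
  have "\<forall>y\<in>set R. y < x" using Cons.prems(2) by (auto simp: entries_def)
  then have "rsk_insert (R # Rs) x = (R @ [x]) # Rs" using bump_greater[of R x] by simp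
  moreover have "foldl rsk_insert ((R @ [x]) # Rs) xs = (R @ x # xs) # Rs"
    using Cons.IH[of "R @ [x]"] Cons.prems by (auto simp: entries_def)
  ultimately show ?case by simp
qed simp

lemma rsk_shape_append_greater:
  assumes "w \<noteq> []" "sorted_wrt (<) xs" "\<forall>v\<in>set w. \<forall>x\<in>set xs. v < x"
  shows "rsk_shape (w @ xs) = (hd (rsk_shape w) + length xs) # tl (rsk_shape w)"
proof -
  obtain R Rs where RR: "rsk_P w = R # Rs" using rsk_P_not_Nil[OF assms(1)] by (cases "rsk_P w") auto
  have "\<forall>v\<in>entries (R # Rs). \<forall>x\<in>set xs. v < x" using entries_rsk_P[of w] RR assms(3) by auto
  then have "rsk_P (w @ xs) = (R @ xs) # Rs"
    using rsk_P_append_greater[OF assms(2)] RR unfolding rsk_P_def by simp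
  then show ?thesis using RR by (simp add: rsk_shape_def)
qed

lemma rsk_insert_snoc_max_row:
  "x < n \<Longrightarrow> \<forall>v\<in>entries T. v < n \<Longrightarrow> rsk_insert (T @ [[n]]) x = rsk_insert T x @ [[n]]"
proof (induction T arbitrary: x)
  case (Cons t ts)
  obtain t' b where tb: "bump t x = (t', b)" by fastforce
  show ?case
  proof (cases b)
    case (Some y)
    have "y \<in> set t" using bump_bumped_mem[of t x y] tb Some by simp
    then show ?thesis using Cons tb Some by (auto simp: entries_def)
  qed (use tb in simp)
qed simp

lemma foldl_rsk_insert_snoc_max_row:
  "\<forall>v\<in>entries T \<union> set xs. v < n \<Longrightarrow>
     foldl rsk_insert (T @ [[n]]) xs = foldl rsk_insert T xs @ [[n]]"
proof (induction xs arbitrary: T)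
  case (Cons a xs)
  have "rsk_insert (T @ [[n]]) a = rsk_insert T a @ [[n]]"
    using Cons.prems by (intro rsk_insert_snoc_max_row) auto
  moreover have "\<forall>v\<in>entries (rsk_insert T a) \<union> set xs. v < n"
    using Cons.prems entries_rsk_insert[of T a] by fastforce
  ultimately show ?case using Cons.IH by simp
qed simp

fun prepend_col :: "nat list \<Rightarrow> nat list list \<Rightarrow> nat list list" where
  "prepend_col [] T = T"
| "prepend_col (d # ds) [] = [d] # prepend_col ds []"
| "prepend_col (d # ds) (t # ts) = (d # t) # prepend_col ds ts"

fun append_col :: "nat list \<Rightarrow> nat list list \<Rightarrow> nat list list" where
  "append_col [] T = T"
| "append_col (e # es) [] = [e] # append_col es []"
| "append_col (e # es) (t # ts) = (t @ [e]) # append_col es ts"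

lemma length_prepend_col: "length (prepend_col cs T) = max (length cs) (length T)"
  by (induction cs T rule: prepend_col.induct) auto

lemma entries_prepend_col: "entries (prepend_col cs T) \<subseteq> set cs \<union> entries T"
  by (induction cs T rule: prepend_col.induct) (auto simp: entries_def)

lemma nth_prepend_col_append:
  "i < length T \<Longrightarrow> prepend_col cs (T @ U) ! i = prepend_col cs T ! i"
proof (induction cs T arbitrary: i rule: prepend_col.induct)
  case (3 d ds t ts)
  then show ?case by (cases i) auto
qed (auto simp: nth_append)

lemma append_col_prepend_col_snoc:
  "length es = length T \<Longrightarrow> length T < length cs \<Longrightarrow>
     append_col es (prepend_col cs (T @ [[n]])) = append_col (es @ [n]) (prepend_col cs T)"
proof (induction T arbitrary: es cs)
  case Nil
  then show ?case by (cases cs) auto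
next
  case (Cons t ts)
  then show ?case by (cases cs; cases es) auto
qed

lemma map_length_append_col_prepend_col:
  "length T \<le> length xs \<Longrightarrow> length xs \<le> length cs \<Longrightarrow>
     map length (append_col xs (prepend_col cs T)) =
       map (\<lambda>l. l + 2) (map length T) @ replicate (length xs - length T) 2
         @ replicate (length cs - length xs) 1"
proof (induction cs arbitrary: xs T)
  case (Cons c cs)
  have column: "map length (prepend_col cs []) = replicate (length cs) 1" for cs
    by (induction cs) auto
  show ?case
  proof (cases xs)
    case Nil
    then show ?thesis using column Cons.prems by simp
  next
    fix x xs' assume xs: "xs = x # xs'"
    then show ?thesis using Cons.IH[where xs = xs'] Cons.prems by (cases T) auto
  qed
qed simp

lemma rsk_insert_prepend_col_inert:
  "\<forall>d\<in>set ds. d < x \<and> (\<forall>v\<in>entries T. d < v) \<Longrightarrow>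
     rsk_insert (prepend_col ds T) x = prepend_col ds (rsk_insert T x)"
proof (induction ds arbitrary: T x)
  case (Cons d ds)
  have dx: "\<not> x < d" using Cons.prems by auto
  show ?case
  proof (cases T)
    case Nil
    then show ?thesis using Cons dx by (simp add: entries_def)
  next
    case (Cons t ts)
    obtain t' b where tb: "bump t x = (t', b)" by fastforce
    show ?thesis
    proof (cases b)
      case (Some y)
      have "y \<in> set t" using bump_bumped_mem[of t x y] tb Some by simp
      then have "rsk_insert (prepend_col ds ts) y = prepend_col ds (rsk_insert ts y)"
        using Cons.prems \<open>T = t # ts\<close> by (intro Cons.IH) (auto simp: entries_def)
      then show ?thesis using tb Some dx \<open>T = t # ts\<close> by simp
    qed (use tb dx \<open>T = t # ts\<close> in simp)
  qed
qed simp

lemma foldl_rsk_insert_prepend_col_inert: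
  "\<forall>d\<in>set ds. \<forall>v\<in>entries T \<union> set xs. d < v \<Longrightarrow>
     foldl rsk_insert (prepend_col ds T) xs = prepend_col ds (foldl rsk_insert T xs)"
proof (induction xs arbitrary: T)
  case (Cons a xs)
  have "rsk_insert (prepend_col ds T) a = prepend_col ds (rsk_insert T a)"
    using Cons.prems by (intro rsk_insert_prepend_col_inert) auto
  moreover have "\<forall>d\<in>set ds. \<forall>v\<in>entries (rsk_insert T a) \<union> set xs. d < v"
    using Cons.prems entries_rsk_insert[of T a] by fastforce
  ultimately show ?case using Cons.IH by simp
qed simp

lemma rsk_insert_prepend_col_bump:
  "sorted_wrt (<) (x # ds) \<Longrightarrow> length T \<le> length ds \<Longrightarrow>
     rsk_insert (prepend_col ds T) x = prepend_col (x # ds) T"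
proof (induction ds arbitrary: x T)
  case (Cons d ds)
  then show ?case by (cases T) auto
qed simp

lemma rsk_insert_prepend_col_bump_snoc:
  "sorted_wrt (<) (x # ds) \<Longrightarrow> length T = length ds \<Longrightarrow> \<forall>d\<in>set (x # ds). d < n \<Longrightarrow>
     rsk_insert (prepend_col ds (T @ [[n]])) x = prepend_col (x # ds) T @ [[n]]"
proof (induction ds arbitrary: x T)
  case (Cons d ds)
  then show ?case by (cases T) auto
qed simp

lemma foldl_rsk_insert_column:
  "sorted_wrt (<) ds \<Longrightarrow> foldl rsk_insert [] (rev ds) = prepend_col ds []"
  by (induction ds) (simp_all add: rsk_insert_prepend_col_bump[of _ _ "[]", simplified])

lemma rsk_insert_append_col_bump:
  "sorted_wrt (<) (x # xs) \<Longrightarrow> length xs < length T \<Longrightarrow>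
     \<forall>i\<le>length xs. \<forall>y\<in>set (T ! i). y < x \<Longrightarrow>
     rsk_insert (append_col xs T) x = append_col (x # xs) T"
proof (induction xs arbitrary: x T)
  case Nil
  then show ?case by (cases T) (auto simp: bump_greater)
next
  case (Cons e xs)
  then obtain t ts where T: "T = t # ts" by (cases T) auto
  have tx: "\<forall>y\<in>set t. y < x" using Cons.prems(3) T by force
  have xe: "x < e" using Cons.prems(1) by simp
  have "\<forall>i\<le>length xs. \<forall>y\<in>set (ts ! i). y < e"
  proof (intro allI impI ballI)
    fix i y assume "i \<le> length xs" "y \<in> set (ts ! i)"
    then have "y < x" using Cons.prems(3) T by (metis Suc_le_mono length_Cons nth_Cons_Suc)
    then show "y < e" using xe by simp
  qed
  then have "rsk_insert (append_col xs ts) e = append_col (e # xs) ts"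
    using Cons.IH Cons.prems T by simp
  then show ?case using T bump_last[OF tx xe] by simp
qed

lemma foldl_rsk_insert_append_col:
  "sorted_wrt (<) (rev ys @ xs) \<Longrightarrow> length ys + length xs \<le> length T \<Longrightarrow>
     \<forall>i<length ys + length xs. \<forall>y\<in>set (T ! i). \<forall>z\<in>set ys. y < z \<Longrightarrow>
     foldl rsk_insert (append_col xs T) ys = append_col (rev ys @ xs) T"
proof (induction ys arbitrary: xs)
  case (Cons z zs)
  have "\<forall>i\<le>length xs. \<forall>y\<in>set (T ! i). y < z"
  proof (intro allI impI ballI)
    fix i y assume "i \<le> length xs" "y \<in> set (T ! i)"
    moreover have "i < length (z # zs) + length xs" using \<open>i \<le> length xs\<close> by simp
    ultimately have "\<forall>a\<in>set (z # zs). y < a" using Cons.prems(3) by blast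
    then show "y < z" by simp
  qed
  moreover have "sorted_wrt (<) (z # xs)"
    using Cons.prems(1) sorted_wrt_append[of "(<)" "rev zs" "z # xs"] by simp
  moreover have "length xs < length T" using Cons.prems(2) by simp
  ultimately have "rsk_insert (append_col xs T) z = append_col (z # xs) T"
    by (intro rsk_insert_append_col_bump)
  moreover have "foldl rsk_insert (append_col (z # xs) T) zs = append_col (rev zs @ z # xs) T"
    using Cons.prems by (intro Cons.IH) simp_all
  ultimately show ?case by simp
qed simp

definition grow :: "nat \<Rightarrow> nat list \<Rightarrow> nat list" where
  "grow r w = rev [2..<2*r] @ [2*r*r] @ map (\<lambda>x. x + (2*r-1)) w @ [1] @ rev [2*r*r-2*r+2..<2*r*r]"

lemma two_sq_eq: "1 \<le> r \<Longrightarrow> 2*r*r = 2*(r-1)^2 + 4*r - (2::nat)"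
  by (cases r) (simp_all add: power2_eq_square algebra_simps)

lemma four_le_two_sq: "2 \<le> r \<Longrightarrow> 4*r \<le> 2*r*(r::nat)"
  using mult_le_mono2[of 2 r "2*r"] by simp

lemma set_shift_grow:
  fixes r :: nat and w :: "nat list"
  assumes r: "1 \<le> r" and w: "set w \<subseteq> {1..2*(r-1)^2}"
  shows "set (map (\<lambda>x. x + (2*r-1)) w) \<subseteq> {2*r..2*r*r-2*r+1}"
proof
  fix y assume "y \<in> set (map (\<lambda>x. x + (2*r-1)) w)"
  then obtain x where x: "x \<in> set w" "y = x + (2*r-1)" by auto
  then have "1 \<le> x" "x \<le> 2*(r-1)^2" using w by auto
  then show "y \<in> {2*r..2*r*r-2*r+1}" using x(2) two_sq_eq[OF r] r by auto
qed

lemma rsk_P_grow: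
  assumes r: "2 \<le> r" and w: "set w \<subseteq> {1..2*(r-1)^2}"
  shows "rsk_P (grow r w) =
    foldl rsk_insert
      (rsk_insert (prepend_col [2..<2*r] (rsk_P (map (\<lambda>x. x + (2*r-1)) w) @ [[2*r*r]])) 1)
      (rev [2*r*r-2*r+2..<2*r*r])"
proof -
  define n where "n = 2*r*r"
  define ds where "ds = [2..<2*r]"
  define M where "M = map (\<lambda>x. x + (2*r-1)) w"
  have n4: "4*r \<le> n" using four_le_two_sq[OF r] by (simp add: n_def)
  have M: "set M \<subseteq> {2*r..n-2*r+1}" using set_shift_grow[of r w] r w by (simp add: M_def n_def)
  have "foldl rsk_insert [] (rev ds) = prepend_col ds []"
    by (rule foldl_rsk_insert_column) (simp add: ds_def sorted_wrt_upt)
  moreover have "rsk_insert (prepend_col ds []) n = prepend_col ds [[n]]"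
    using rsk_insert_prepend_col_inert[of ds n "[]"] n4 by (auto simp: ds_def entries_def)
  moreover have "foldl rsk_insert (prepend_col ds [[n]]) M = prepend_col ds (foldl rsk_insert [[n]] M)"
    using M n4 by (intro foldl_rsk_insert_prepend_col_inert) (auto simp: ds_def entries_def)
  moreover have "\<forall>v\<in>entries [] \<union> set M. v < n"
  proof
    fix v assume "v \<in> entries [] \<union> set M"
    then have "v \<le> n-2*r+1" using M by (auto simp: entries_def)
    then show "v < n" using n4 r by linarith
  qed
  then have "foldl rsk_insert [[n]] M = rsk_P M @ [[n]]"
    using foldl_rsk_insert_snoc_max_row[of "[]" M n] by (simp add: rsk_P_def)
  ultimately show ?thesis by (simp add: rsk_P_def grow_def ds_def n_def M_def)
qed

lemma entries_prepend_col_shift_le: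
  assumes r: "2 \<le> r" and w: "set w \<subseteq> {1..2*(r-1)^2}"
  shows "\<forall>y\<in>entries (prepend_col [1..<2*r] (rsk_P (map (\<lambda>x. x + (2*r-1)) w))). y \<le> 2*r*r-2*r+1"
proof
  fix y assume y: "y \<in> entries (prepend_col [1..<2*r] (rsk_P (map (\<lambda>x. x + (2*r-1)) w)))"
  have "y \<in> set [1..<2*r] \<or> y \<in> set (map (\<lambda>x. x + (2*r-1)) w)"
    using subsetD[OF entries_prepend_col y] entries_rsk_P[of "map (\<lambda>x. x + (2*r-1)) w"] by blast
  then show "y \<le> 2*r*r-2*r+1"
  proof
    assume "y \<in> set [1..<2*r]"
    then have "y < 2*r" by simp
    with four_le_two_sq[OF r] show ?thesis by linarith
  qed (use set_shift_grow[of r w] r w in auto)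
qed

lemma upt_split_first: "1 \<le> r \<Longrightarrow> [1..<2*r] = 1 # [2..<2*r]"
  using upt_conv_Cons[of 1 "2*r"] by (simp add: numeral_2_eq_2)

text \<open>
  When the tableau of \<open>w\<close> has \<open>2r-3\<close> rows, the entry \<open>2r\<^sup>2\<close> sits alone at the bottom of the
  second column and is picked up by the new right column.
\<close>

lemma rsk_P_grow_short:
  assumes r: "2 \<le> r" and w: "set w \<subseteq> {1..2*(r-1)^2}" and rows: "length (rsk_P w) = 2*r-3"
  shows "rsk_P (grow r w) =
    append_col [2*r*r-2*r+2..<2*r*r+1] (prepend_col [1..<2*r] (rsk_P (map (\<lambda>x. x + (2*r-1)) w)))"
proof -
  define n where "n = 2*r*r"
  define Q where "Q = rsk_P (map (\<lambda>x. x + (2*r-1)) w)"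
  define B where "B = prepend_col [1..<2*r] Q"
  define T where "T = prepend_col [1..<2*r] (Q @ [[n]])"
  define x where "x = n-2*r+2"
  have n4: "4*r \<le> n" using four_le_two_sq[OF r] by (simp add: n_def)
  have lQ: "length Q = 2*r-3" using rows by (simp add: Q_def rsk_P_shift)
  have lB: "length B = 2*r-1" using r by (simp add: B_def length_prepend_col lQ)
  have B_le: "\<forall>y\<in>entries B. y \<le> n-2*r+1"
    using entries_prepend_col_shift_le[OF r w] by (simp add: B_def Q_def n_def)
  have col: "[1..<2*r] = 1 # [2..<2*r]" using r by (intro upt_split_first) simp
  have ins1: "rsk_insert (prepend_col [2..<2*r] (Q @ [[n]])) 1 = T"
    unfolding T_def col using r lQ by (intro rsk_insert_prepend_col_bump) (simp_all add: sorted_wrt_upt)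
  have run: "rev [x..<n] = rev [Suc x..<n] @ [x]"
    using n4 r by (simp add: x_def upt_conv_Cons)
  have T_B: "T ! i = B ! i" if "i < length Q" for i
    using that nth_prepend_col_append[of i Q _ "[[n]]"] by (simp add: T_def B_def)
  have right_col: "\<forall>i<length (rev [Suc x..<n]) + length []. \<forall>y\<in>set (T ! i).
      \<forall>z\<in>set (rev [Suc x..<n]). y < z"
  proof (intro allI impI ballI)
    fix i y z
    assume i: "i < length (rev [Suc x..<n]) + length []" and y: "y \<in> set (T ! i)"
      and z: "z \<in> set (rev [Suc x..<n])"
    have "i < length Q" using i lQ n4 by (simp add: x_def)
    moreover from this have "i < length B" using lB lQ by simp
    ultimately have "y \<in> entries B" using y T_B nth_subset_entries[of i B] by auto
    then have "y \<le> n-2*r+1" using B_le by blast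
    moreover have "x < z" using z by simp
    ultimately show "y < z" by (simp add: x_def)
  qed
  have shifted_col: "\<forall>i\<le>length ([Suc x..<n] @ [n]). \<forall>y\<in>set (B ! i). y < x"
  proof (intro allI impI ballI)
    fix i y assume i: "i \<le> length ([Suc x..<n] @ [n])" and y: "y \<in> set (B ! i)"
    have "i \<le> n - Suc x + 1" using i by simp
    then have "i < length B" using lB n4 r unfolding x_def by linarith
    then have "y \<le> n-2*r+1" using y B_le nth_subset_entries[of i B] by blast
    then show "y < x" by (simp add: x_def)
  qed
  have "rsk_P (grow r w) = foldl rsk_insert T (rev [x..<n])"
    using rsk_P_grow[OF r w] ins1 by (simp add: Q_def n_def x_def)
  also have "\<dots> = rsk_insert (foldl rsk_insert (append_col [] T) (rev [Suc x..<n])) x"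
    by (simp add: run)
  also have "foldl rsk_insert (append_col [] T) (rev [Suc x..<n]) = append_col [Suc x..<n] T"
    using foldl_rsk_insert_append_col[OF _ _ right_col] lQ n4 r
    by (simp add: T_def length_prepend_col x_def)
  also have "append_col [Suc x..<n] T = append_col ([Suc x..<n] @ [n]) B"
    unfolding T_def B_def using lQ n4 r
    by (intro append_col_prepend_col_snoc) (simp_all add: x_def)
  also have "rsk_insert \<dots> x = append_col (x # [Suc x..<n] @ [n]) B"
    using rsk_insert_append_col_bump[OF _ _ shifted_col] lB n4 r
    by (simp add: x_def sorted_wrt_append)
  also have "x # [Suc x..<n] @ [n] = [x..<n+1]"
    using n4 r by (simp add: x_def upt_conv_Cons)
  finally show ?thesis by (simp add: B_def Q_def x_def n_def)
qed

text \<open>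
  When the tableau of \<open>w\<close> has \<open>2r-2\<close> rows, the first column is as long as the tableau, so the
  entry \<open>2r\<^sup>2\<close> is bumped into a new row of its own.
\<close>

lemma rsk_P_grow_long:
  assumes r: "2 \<le> r" and w: "set w \<subseteq> {1..2*(r-1)^2}" and rows: "length (rsk_P w) = 2*r-2"
  shows "rsk_P (grow r w) =
    append_col [2*r*r-2*r+2..<2*r*r] (prepend_col [1..<2*r] (rsk_P (map (\<lambda>x. x + (2*r-1)) w)))
      @ [[2*r*r]]"
proof -
  define n where "n = 2*r*r"
  define Q where "Q = rsk_P (map (\<lambda>x. x + (2*r-1)) w)"
  define B where "B = prepend_col [1..<2*r] Q"
  define E where "E = rev [n-2*r+2..<n]"
  have n4: "4*r \<le> n" using four_le_two_sq[OF r] by (simp add: n_def)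
  have lQ: "length Q = 2*r-2" using rows by (simp add: Q_def rsk_P_shift)
  have lB: "length B = 2*r-1" using r by (simp add: B_def length_prepend_col lQ)
  have B_le: "\<forall>y\<in>entries B. y \<le> n-2*r+1"
    using entries_prepend_col_shift_le[OF r w] by (simp add: B_def Q_def n_def)
  have col: "[1..<2*r] = 1 # [2..<2*r]" using r by (intro upt_split_first) simp
  have ins1: "rsk_insert (prepend_col [2..<2*r] (Q @ [[n]])) 1 = B @ [[n]]"
    unfolding B_def col using r lQ n4
    by (intro rsk_insert_prepend_col_bump_snoc) (simp_all add: sorted_wrt_upt)
  have below_n: "\<forall>v\<in>entries B \<union> set E. v < n"
  proof
    fix v assume "v \<in> entries B \<union> set E"
    then show "v < n"
    proof
      assume "v \<in> entries B"
      then have "v \<le> n-2*r+1" using B_le by blast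
      then show "v < n" using n4 r by linarith
    qed (simp add: E_def)
  qed
  have right_col: "\<forall>i<length E + length []. \<forall>y\<in>set (B ! i). \<forall>z\<in>set E. y < z"
  proof (intro allI impI ballI)
    fix i y z assume i: "i < length E + length []" and y: "y \<in> set (B ! i)" and z: "z \<in> set E"
    have "i < length B" using i lB n4 by (simp add: E_def)
    then have "y \<le> n-2*r+1" using y B_le nth_subset_entries[of i B] by blast
    then show "y < z" using z by (simp add: E_def)
  qed
  have "rsk_P (grow r w) = foldl rsk_insert (B @ [[n]]) E"
    using rsk_P_grow[OF r w] ins1 by (simp add: Q_def n_def E_def)
  also have "\<dots> = foldl rsk_insert B E @ [[n]]"
    by (rule foldl_rsk_insert_snoc_max_row[OF below_n])
  also have "foldl rsk_insert B E = append_col [n-2*r+2..<n] B"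
    using foldl_rsk_insert_append_col[OF _ _ right_col] lB n4
    by (simp add: E_def)
  finally show ?thesis by (simp add: B_def Q_def n_def)
qed

lemma rsk_shape_grow_short:
  assumes r: "2 \<le> r" and w: "set w \<subseteq> {1..2*(r-1)^2}" and rows: "length (rsk_shape w) = 2*r-3"
  shows "rsk_shape (grow r w) = map (\<lambda>l. l + 2) (rsk_shape w) @ [2, 2]"
proof -
  define Q where "Q = rsk_P (map (\<lambda>x. x + (2*r-1)) w)"
  define n where "n = 2*r*r"
  define xs where "xs = [n-2*r+2..<n+1]"
  have shape: "map length Q = rsk_shape w" by (simp add: Q_def rsk_shape_shift)
  have lQ: "length Q = 2*r-3" using rows shape by (metis length_map)
  have "4*r \<le> n" using four_le_two_sq[OF r] by (simp add: n_def)
  then have lxs: "length xs = 2*r-1" unfolding xs_def length_upt by linarith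
  have "rsk_shape (grow r w) = map length (append_col xs (prepend_col [1..<2*r] Q))"
    using rsk_P_grow_short[OF r w] rows by (simp add: rsk_shape_def Q_def xs_def n_def)
  also have "\<dots> = map (\<lambda>l. l + 2) (map length Q) @ replicate (2*r-1 - (2*r-3)) 2 @ replicate 0 1"
    using map_length_append_col_prepend_col[of Q xs "[1..<2*r]"] lQ lxs by simp
  also have "2*r-1 - (2*r-3) = 2" using r by simp
  finally show ?thesis by (simp add: shape numeral_2_eq_2)
qed

lemma rsk_shape_grow_long:
  assumes r: "2 \<le> r" and w: "set w \<subseteq> {1..2*(r-1)^2}" and rows: "length (rsk_shape w) = 2*r-2"
  shows "rsk_shape (grow r w) = map (\<lambda>l. l + 2) (rsk_shape w) @ [1, 1]"
proof -
  define Q where "Q = rsk_P (map (\<lambda>x. x + (2*r-1)) w)"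
  define n where "n = 2*r*r"
  define xs where "xs = [n-2*r+2..<n]"
  have shape: "map length Q = rsk_shape w" by (simp add: Q_def rsk_shape_shift)
  have lQ: "length Q = 2*r-2" using rows shape by (metis length_map)
  have "4*r \<le> n" using four_le_two_sq[OF r] by (simp add: n_def)
  then have lxs: "length xs = 2*r-2" unfolding xs_def length_upt by linarith
  have "rsk_shape (grow r w) = map length (append_col xs (prepend_col [1..<2*r] Q)) @ [1]"
    using rsk_P_grow_long[OF r w] rows by (simp add: rsk_shape_def Q_def xs_def n_def)
  also have "map length (append_col xs (prepend_col [1..<2*r] Q)) =
      map (\<lambda>l. l + 2) (map length Q) @ replicate 0 2 @ replicate (2*r-1 - (2*r-2)) 1"
    using map_length_append_col_prepend_col[of Q xs "[1..<2*r]"] lQ lxs by simp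
  also have "2*r-1 - (2*r-2) = 1" using r by simp
  finally show ?thesis by (simp add: shape)
qed

lemma set_grow:
  assumes r: "2 \<le> r" and w: "set w = {1..2*(r-1)^2}"
  shows "set (grow r w) = {1..2*r*r}"
proof -
  define K where "K = 2*(r-1)^2"
  have "(\<lambda>x. x + (2*r-1)) ` set w = {1 + (2*r-1)..K + (2*r-1)}"
    unfolding w K_def[symmetric] by (rule image_add_atLeastAtMost')
  then have "set (grow r w) = {2..<2*r} \<union> {2*r*r} \<union> {2*r..K+2*r-1} \<union> {1} \<union> {2*r*r-2*r+2..<2*r*r}"
    using r by (auto simp: grow_def)
  also have "\<dots> = {1..2*r*r}"
    using two_sq_eq[of r] r unfolding K_def by auto
  finally show ?thesis .
qed

lemma length_grow: "1 \<le> r \<Longrightarrow> length w = 2*(r-1)^2 \<Longrightarrow> length (grow r w) = 2*r*r"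
  using two_sq_eq[of r] by (simp add: grow_def)

lemma grow_swap_adj:
  assumes r: "2 \<le> r" and k: "1 \<le> k" "k + 1 \<le> 2*(r-1)^2"
  shows "grow r (map (swap_adj k) w) = map (swap_adj (k + (2*r-1))) (grow r w)"
proof -
  define s where "s = k + (2*r-1)"
  have fixed: "map (swap_adj s) xs = xs" if "\<forall>x\<in>set xs. x \<noteq> s \<and> x \<noteq> s + 1" for xs
    using that by (intro map_idI) (auto simp: swap_adj_def)
  have "s + 1 < 2*r*r-2*r+2" using k two_sq_eq[of r] r by (simp add: s_def)
  then have "map (swap_adj s) (rev [2..<2*r]) = rev [2..<2*r]"
    and "map (swap_adj s) [2*r*r] = [2*r*r]"
    and "map (swap_adj s) [1] = [1]"
    and "map (swap_adj s) (rev [2*r*r-2*r+2..<2*r*r]) = rev [2*r*r-2*r+2..<2*r*r]"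
    using k r by (intro fixed; auto simp: s_def)+
  moreover have "map (swap_adj s) (map (\<lambda>x. x + (2*r-1)) w) = map (\<lambda>x. x + (2*r-1)) (map (swap_adj k) w)"
    by (auto simp: swap_adj_def s_def)
  ultimately show ?thesis by (simp add: grow_def s_def)
qed

fun tower :: "nat list \<Rightarrow> nat \<Rightarrow> nat list" where
  "tower w 0 = w"
| "tower w (Suc j) = grow (j + 2) (tower w j)"

lemma tower_perm:
  assumes "w \<in> {[1,2], [2,1]}"
  shows "set (tower w j) = {1..2*(j+1)^2} \<and> length (tower w j) = 2*(j+1)^2"
proof (induction j)
  case 0
  then show ?case using assms by (auto simp: numeral_2_eq_2)
next
  case (Suc j)
  have "set (tower w (Suc j)) = {1..2*(j+2)*(j+2)}"
    using set_grow[of "j+2" "tower w j"] Suc by simp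
  moreover have "length (tower w (Suc j)) = 2*(j+2)*(j+2)"
    using length_grow[of "j+2" "tower w j"] Suc by simp
  ultimately show ?case by (simp add: power2_eq_square)
qed

lemma tower_swap_adj: "tower [2,1] j = map (swap_adj ((j+1)^2)) (tower [1,2] j)"
proof (induction j)
  case 0
  then show ?case by (simp add: swap_adj_def)
next
  case (Suc j)
  have "(j+1)^2 + 1 \<le> 2*(j+2-1)^2" by (simp add: power2_eq_square)
  then have "tower [2,1] (Suc j) = map (swap_adj ((j+1)^2 + (2*(j+2)-1))) (tower [1,2] (Suc j))"
    using Suc grow_swap_adj[of "j+2" "(j+1)^2" "tower [1,2] j"] by simp
  also have "(j+1)^2 + (2*(j+2)-1) = (Suc j + 1)^2" by (simp add: power2_eq_square)
  finally show ?case .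
qed

fun widen :: "nat list \<Rightarrow> nat list \<Rightarrow> nat \<Rightarrow> nat list" where
  "widen t la 0 = la"
| "widen t la (Suc j) = map (\<lambda>l. l + 2) (widen t la j) @ t"

lemma length_widen: "length (widen t la j) = length la + j * length t"
  by (induction j) auto

lemma rsk_shape_tower_12: "rsk_shape (tower [1,2] j) = widen [2,2] [2] j"
proof (induction j)
  case 0
  then show ?case by (simp add: rsk_shape_def rsk_P_def)
next
  case (Suc j)
  have "set (tower [1,2] j) = {1..2*(j+2-1)^2}"
    using tower_perm[of "[1,2]" j] by simp
  moreover have "length (rsk_shape (tower [1,2] j)) = 2*(j+2)-3"
    using Suc.IH by (simp add: length_widen)
  ultimately show ?case
    using rsk_shape_grow_short[of "j+2" "tower [1,2] j"] Suc.IH by simp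
qed

lemma rsk_shape_tower_21: "rsk_shape (tower [2,1] j) = widen [1,1] [1,1] j"
proof (induction j)
  case 0
  then show ?case by (simp add: rsk_shape_def rsk_P_def)
next
  case (Suc j)
  have "set (tower [2,1] j) = {1..2*(j+2-1)^2}"
    using tower_perm[of "[2,1]" j] by simp
  moreover have "length (rsk_shape (tower [2,1] j)) = 2*(j+2)-2"
    using Suc.IH by (simp add: length_widen)
  ultimately show ?case
    using rsk_shape_grow_long[of "j+2" "tower [2,1] j"] Suc.IH by simp
qed

lemma part_map_append:
  "part (map f L @ t) i = (if i < length L then f (L ! i) else part t (i - length L))"
  unfolding part_def by (auto simp: nth_append)

lemma part_widen_diff:
  "\<bar>real (part (widen [2,2] [2] j) i) - real (part (widen [1,1] [1,1] j) i)\<bar> =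
     (if i < 2*j+2 then 1 else 0)"
proof (induction j arbitrary: i)
  case 0
  then show ?case by (cases i; cases "i - 1") (auto simp: part_def)
next
  case (Suc j)
  define L where "L = widen [2,2] [2] j"
  define M where "M = widen [1,1] [1,1] j"
  have lL: "length L = 2*j+1" and lM: "length M = 2*j+2" by (simp_all add: L_def M_def length_widen)
  have diff: "\<bar>real (part L i) - real (part M i)\<bar> = (if i < 2*j+2 then 1 else 0)" for i
    using Suc.IH by (simp add: L_def M_def)
  have M_last: "M ! (2*j+1) = 1" using diff[of "2*j+1"] lL lM by (simp add: part_def)
  consider "i < 2*j+1" | "i = 2*j+1" | "2*j+2 \<le> i" by linarith
  then show ?case
  proof cases
    case 1
    then have "\<bar>real (L ! i) - real (M ! i)\<bar> = 1" using diff[of i] lL lM by (simp add: part_def)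
    then show ?thesis using 1 lL lM by (simp add: L_def M_def part_map_append)
  next
    case 2
    then show ?thesis using M_last lL lM by (simp add: L_def M_def part_map_append part_def nth_append)
  next
    case 3
    then consider "i = 2*j+2" | "i = 2*j+3" | "2*j+4 \<le> i" by linarith
    then show ?thesis using lL lM by cases (simp_all add: L_def M_def part_map_append part_def nth_append)
  qed
qed

lemma part_hd_add:
  "la \<noteq> [] \<Longrightarrow> part ((hd la + c) # tl la) i = part la i + (if i = 0 then c else 0)"
  unfolding part_def by (cases la; cases i) auto

lemma sum_lessThan_indicator: "(\<Sum>i<N. if i < m then (1::real) else 0) = real (min N m)"
  by (induction N) (auto simp: min_def)

lemma Delta_widen_hd_add:
  assumes "2*(j+1) \<le> N"
  shows "Delta N ((hd (widen [2,2] [2] j) + c) # tl (widen [2,2] [2] j))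
                 ((hd (widen [1,1] [1,1] j) + c) # tl (widen [1,1] [1,1] j)) = real (j+1)"
proof -
  have "widen [2,2] [2] j \<noteq> []" "widen [1,1] [1,1] j \<noteq> []"
    using length_widen[of "[2,2]" "[2]" j] length_widen[of "[1,1]" "[1,1]" j] by auto
  then have "Delta N ((hd (widen [2,2] [2] j) + c) # tl (widen [2,2] [2] j))
                     ((hd (widen [1,1] [1,1] j) + c) # tl (widen [1,1] [1,1] j))
           = (\<Sum>i<N. if i < 2*j+2 then (1::real) else 0) / 2"
    using part_widen_diff[of j] by (simp add: Delta_def part_hd_add)
  also have "\<dots> = real (j+1)" using assms by (simp add: sum_lessThan_indicator)
  finally show ?thesis .
qed

lemma is_perm_append_upt:
  assumes "set w = {1..m}" "length w = m" "m \<le> n"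
  shows "is_perm n (w @ [m+1..<n+1])"
proof -
  have set: "set (w @ [m+1..<n+1]) = {1..n}" using assms by auto
  moreover have length: "length (w @ [m+1..<n+1]) = n" using assms by simp
  moreover have "distinct (w @ [m+1..<n+1])"
    by (rule card_distinct) (simp only: set length card_atLeastAtMost diff_Suc_1)
  ultimately show ?thesis by (simp add: is_perm_def)
qed

lemma perm_dist_swap_adj:
  assumes p: "is_perm n p" and k: "1 \<le> k" "k < n"
  shows "perm_dist n p (map (swap_adj k) p) = 1"
  unfolding perm_dist_def
proof (rule Least_equality)
  have "adj_step n p (map (swap_adj k) p)" using k unfolding adj_step_def by auto
  then show "(adj_step n ^^ 1) p (map (swap_adj k) p)" by (simp add: eq_OO)
  have "k \<in> set p" using p k by (simp add: is_perm_def)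
  then obtain i where i: "i < length p" "p ! i = k" by (auto simp: in_set_conv_nth)
  then have "map (swap_adj k) p ! i = k + 1" by (simp add: swap_adj_def)
  then have "p ! i \<noteq> map (swap_adj k) p ! i" using i by simp
  then have "p \<noteq> map (swap_adj k) p" by metis
  then show "1 \<le> m" if "(adj_step n ^^ m) p (map (swap_adj k) p)" for m
    using that by (cases m) auto
qed

lemma adjacent_perms_with_Delta:
  assumes r: "1 \<le> r" and n: "2*r*r \<le> n"
  shows "\<exists>\<pi> \<tau>. is_perm n \<pi> \<and> is_perm n \<tau> \<and> perm_dist n \<pi> \<tau> = 1 \<and>
           Delta n (rsk_shape \<pi>) (rsk_shape \<tau>) = real r"
proof (intro exI conjI)
  define j where "j = r - 1"
  define pad where "pad = [2*r*r+1..<n+1]"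
  have j: "(j+1)^2 = r*r" using r by (simp add: j_def power2_eq_square)
  have perm12: "set (tower [1,2] j) = {1..2*r*r}" "length (tower [1,2] j) = 2*r*r"
    and perm21: "set (tower [2,1] j) = {1..2*r*r}" "length (tower [2,1] j) = 2*r*r"
    using tower_perm[of "[1,2]" j] tower_perm[of "[2,1]" j] j by simp_all
  show p: "is_perm n (tower [1,2] j @ pad)" "is_perm n (tower [2,1] j @ pad)"
    using perm12 perm21 n is_perm_append_upt by (simp_all add: pad_def)
  have "map (swap_adj (r*r)) pad = pad"
    using r by (intro map_idI) (auto simp: pad_def swap_adj_def)
  then have "tower [2,1] j @ pad = map (swap_adj (r*r)) (tower [1,2] j @ pad)"
    using tower_swap_adj[of j] j by simp
  moreover have "r*r < n"
  proof -
    have "2*(r*r) \<le> n" using n by (simp add: mult.assoc)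
    moreover have "0 < r*r" using r by simp
    ultimately show ?thesis by linarith
  qed
  moreover have "1 \<le> r*r" using r by simp
  ultimately show "perm_dist n (tower [1,2] j @ pad) (tower [2,1] j @ pad) = 1"
    using perm_dist_swap_adj[OF p(1)] by presburger
  have sorted: "sorted_wrt (<) pad" unfolding pad_def by (rule sorted_wrt_upt)
  have "\<forall>v\<in>set (tower [1,2] j). \<forall>x\<in>set pad. v < x"
    and "\<forall>v\<in>set (tower [2,1] j). \<forall>x\<in>set pad. v < x"
    using perm12 perm21 by (auto simp: pad_def)
  moreover have "tower [1,2] j \<noteq> []" "tower [2,1] j \<noteq> []" using perm12 perm21 r by auto
  ultimately have
    "rsk_shape (tower [1,2] j @ pad) = (hd (widen [2,2] [2] j) + length pad) # tl (widen [2,2] [2] j)"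
    "rsk_shape (tower [2,1] j @ pad) = (hd (widen [1,1] [1,1] j) + length pad) # tl (widen [1,1] [1,1] j)"
    using rsk_shape_append_greater[OF _ sorted] rsk_shape_tower_12 rsk_shape_tower_21 by simp_all
  moreover have "2*(j+1) \<le> n" using r n j_def by (metis le_add_diff_inverse2 le_trans mult_le_mono2 mult_1_right)
  ultimately show "Delta n (rsk_shape (tower [1,2] j @ pad)) (rsk_shape (tower [2,1] j @ pad)) = real r"
    using Delta_widen_hd_add[of j n "length pad"] r by (simp add: j_def)
qed

definition sqrt_half_rounding :: "nat \<Rightarrow> real" where
  "sqrt_half_rounding n = 1 - real (nat \<lfloor>sqrt (real n / 2)\<rfloor>) / sqrt (real n / 2)"

lemma sqrt_half_rounding_nonneg: "0 \<le> sqrt_half_rounding n"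
  by (cases "n = 0") (simp_all add: sqrt_half_rounding_def divide_le_eq of_nat_nat)

lemma sqrt_half_rounding_tendsto_0: "sqrt_half_rounding \<longlonglongrightarrow> 0"
proof (rule tendsto_sandwich[OF _ _ tendsto_const])
  have "filterlim (\<lambda>n::nat. (1/2) * real n) at_top sequentially"
    by (rule filterlim_tendsto_pos_mult_at_top[OF tendsto_const]) (simp_all add: filterlim_real_sequentially)
  then have "filterlim (\<lambda>n::nat. sqrt (real n / 2)) at_top sequentially"
    using filterlim_compose[OF sqrt_at_top] by (simp add: field_simps)
  then show "(\<lambda>n. 1 / sqrt (real n / 2)) \<longlonglongrightarrow> 0"
    by (intro tendsto_divide_0[OF tendsto_const] filterlim_at_top_imp_at_infinity)
  show "\<forall>\<^sub>F n in sequentially. 0 \<le> sqrt_half_rounding n"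
    by (simp add: sqrt_half_rounding_nonneg)
  show "\<forall>\<^sub>F n in sequentially. sqrt_half_rounding n \<le> 1 / sqrt (real n / 2)"
  proof (rule eventually_sequentiallyI[of 1])
    fix n :: nat assume "1 \<le> n"
    then have s: "sqrt (real n / 2) > 0" by simp
    have "sqrt_half_rounding n = (sqrt (real n / 2) - real (nat \<lfloor>sqrt (real n / 2)\<rfloor>)) / sqrt (real n / 2)"
      using s by (simp add: sqrt_half_rounding_def field_simps)
    also have "\<dots> \<le> 1 / sqrt (real n / 2)"
    proof (rule divide_right_mono)
      have "sqrt (real n / 2) - 1 < real (nat \<lfloor>sqrt (real n / 2)\<rfloor>)" by (simp add: of_nat_nat)
      then show "sqrt (real n / 2) - real (nat \<lfloor>sqrt (real n / 2)\<rfloor>) \<le> 1" by linarith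
    qed (use s in simp)
    finally show "sqrt_half_rounding n \<le> 1 / sqrt (real n / 2)" .
  qed
qed

lemma two_sq_floor_sqrt_half_le: "2 * (nat \<lfloor>sqrt (real n / 2)\<rfloor>)^2 \<le> n"
proof -
  have "real (nat \<lfloor>sqrt (real n / 2)\<rfloor>) ^ 2 \<le> sqrt (real n / 2) ^ 2"
    by (intro power_mono) (simp_all add: of_nat_nat)
  then have "real (2 * (nat \<lfloor>sqrt (real n / 2)\<rfloor>)^2) \<le> real n" by simp
  then show ?thesis by linarith
qed

theorem theorem3:
  shows "\<exists>\<epsilon> :: nat \<Rightarrow> real. (\<forall>n. 0 \<le> \<epsilon> n) \<and> \<epsilon> \<longlonglongrightarrow> 0 \<and>
    (\<forall>n \<ge> 2. \<exists>\<pi> \<tau>. is_perm n \<pi> \<and> is_perm n \<tau> \<and> perm_dist n \<pi> \<tau> = 1 \<and>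
        Delta n (rsk_shape \<pi>) (rsk_shape \<tau>) \<ge> (1 - \<epsilon> n) * sqrt (real n / 2))"
proof (intro exI[of _ sqrt_half_rounding] conjI allI impI)
  show "0 \<le> sqrt_half_rounding n" for n by (rule sqrt_half_rounding_nonneg)
  show "sqrt_half_rounding \<longlonglongrightarrow> 0" by (rule sqrt_half_rounding_tendsto_0)
  fix n :: nat assume n: "2 \<le> n"
  define r where "r = nat \<lfloor>sqrt (real n / 2)\<rfloor>"
  have "1 \<le> r" using n by (simp add: r_def le_nat_floor)
  moreover have "2*r*r \<le> n" using two_sq_floor_sqrt_half_le[of n] by (simp add: r_def power2_eq_square)
  moreover have "(1 - sqrt_half_rounding n) * sqrt (real n / 2) = real r"
    using n by (simp add: sqrt_half_rounding_def r_def)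
  ultimately show "\<exists>\<pi> \<tau>. is_perm n \<pi> \<and> is_perm n \<tau> \<and> perm_dist n \<pi> \<tau> = 1 \<and>
      (1 - sqrt_half_rounding n) * sqrt (real n / 2) \<le> Delta n (rsk_shape \<pi>) (rsk_shape \<tau>)"
    using adjacent_perms_with_Delta by (metis order_refl)
qed

end
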